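(* Let $\mathscr P$ be a polymatroid and let $\mathrm{Stal}_{\mathscr P}$ be computed with respect to any lexicographic order on $\mathbb N^p$. Then $\mathrm{Stal}_{\mathscr P}(\mathbf t)=\text{M\"ob}_{\mathscr P}(\mathbf t)$.
   Context: Notation: $[p]=\{1,\dots,p\}$; $\mathbf e_i$ is the $i$th standard basis vector; $\mathbf e_J=\sum_{j\in J}\mathbf e_j$; $|\mathbf n|=n_1+\dots+n_p$; $\le$ is componentwise, $<$ its strict version; $\mathbf t^{\mathbf n}=t_1^{n_1}\cdots t_p^{n_p}$. Polymatroid: a finite set $\mathscr P\subseteq\mathbb N^p$ that is homogeneous (all $\mathbf u\in\mathscr P$ have the same $|\mathbf u|$, the rank $\mathrm{rk}(\mathscr P)$) and M-convex: for all $\mathbf u,\mathbf v\in\mathscr P$ and $i$ with $u_i>v_i$ there is $j$ with $u_j<v_j$ and $\mathbf u-\mathbf e_i+\mathbf e_j\in\mathscr P$. $I(\mathscr P)=\{\mathbf n\in\mathbb N^p:\mathbf n\le\mathbf u\text{ for some }\mathbf u\in\mathscr P\}$. Lexicographic orders: given a total ordering $\sigma_1,\dots,\sigma_p$ of $[p]$, $\mathbf u\prec\mathbf v$ iff $\mathbf u\neq\mathbf v$ and at the first index (in the order $\sigma_1,\sigma_2,\dots$) where they differ, $\mathbf u$ has the smaller entry. Stalactites: for $\mathbf u\in\mathscr P$, $V\subseteq\mathscr P$, $L(\mathbf u;V)=\{\ell\in[p]:\mathbf u-\mathbf e_\ell+\mathbf e_j\in V\text{ for some }j\}$, $\mathrm{St}(\mathbf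 u;V)=\{\mathbf u-\mathbf e_J:J\subseteq L(\mathbf u;V)\}$. With $\mathscr P=\{\mathbf a_1\prec\dots\prec\mathbf a_r\}$, $c_{\mathbf n}(\mathscr P)$ is the number of $k$ with $\mathbf n\in\mathrm{St}(\mathbf a_k;\{\mathbf a_1,\dots,\mathbf a_{k-1}\})$; $\mathrm{Stal}_{\mathscr P}(\mathbf t)=\sum_{\mathbf n\in I(\mathscr P)}(-1)^{\mathrm{rk}(\mathscr P)-|\mathbf n|}c_{\mathbf n}(\mathscr P)\mathbf t^{\mathbf n}$. M\"obius polynomial: $P$ is the poset on $I(\mathscr P)\sqcup\{\hat1\}$ (componentwise order on $I(\mathscr P)$, $\hat1$ a new maximum), $\mu_P(\mathbf m,\mathbf m)=1$, $\mu_P(\mathbf m,\mathbf n)=-\sum_{\mathbf m\le\mathbf a<\mathbf n}\mu_P(\mathbf m,\mathbf a)$ for $\mathbf m<\mathbf n$; $\mu_{\mathscr P}(\mathbf n)=-\mu_P(\mathbf n,\hat1)$; $\text{M\"ob}_{\mathscr P}(\mathbf t)=\sum_{\mathbf n\in I(\mathscr P)}\mu_{\mathscr P}(\mathbf n)\mathbf t^{\mathbf n}$. *)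

theory Defs
  imports Main
begin

(* Vectors in N^p are functions nat => nat, indexed by [p] = {1..p}, zero outside [p]. *)
definition vecs :: "nat \<Rightarrow> (nat \<Rightarrow> nat) set" where
  "vecs p = {v. \<forall>i. i \<notin> {1..p} \<longrightarrow> v i = 0}"

definition size1 :: "nat \<Rightarrow> (nat \<Rightarrow> nat) \<Rightarrow> nat" where
  "size1 p n = (\<Sum>i\<in>{1..p}. n i)"

definition exch :: "(nat \<Rightarrow> nat) \<Rightarrow> nat \<Rightarrow> nat \<Rightarrow> (nat \<Rightarrow> nat)" where
  "exch u i j = (\<lambda>k. u k - (if k = i then 1 else 0) + (if k = j then 1 else 0))"

definition polymatroid :: "nat \<Rightarrow> (nat \<Rightarrow> nat) set \<Rightarrow> bool" where
  "polymatroid p P \<longleftrightarrow>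
     finite P \<and> P \<subseteq> vecs p \<and>
     (\<forall>u\<in>P. \<forall>v\<in>P. size1 p u = size1 p v) \<and>
     (\<forall>u\<in>P. \<forall>v\<in>P. \<forall>i\<in>{1..p}. v i < u i \<longrightarrow>
        (\<exists>j\<in>{1..p}. u j < v j \<and> exch u i j \<in> P))"

definition rk :: "nat \<Rightarrow> (nat \<Rightarrow> nat) set \<Rightarrow> nat" where
  "rk p P = size1 p (SOME u. u \<in> P)"

definition Ideal :: "nat \<Rightarrow> (nat \<Rightarrow> nat) set \<Rightarrow> (nat \<Rightarrow> nat) set" where
  "Ideal p P = {n \<in> vecs p. \<exists>u\<in>P. n \<le> u}"

(* lexicographic order w.r.t. the ordering sigma 1, ..., sigma p of [p] *)
definition lex_less :: "nat \<Rightarrow> (nat \<Rightarrow> nat) \<Rightarrow> (nat \<Rightarrow> nat) \<Rightarrow> (nat \<Rightarrow> nat) \<Rightarrow> bool" where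
  "lex_less p \<sigma> u v \<longleftrightarrow> u \<noteq> v \<and>
     (\<exists>k\<in>{1..p}. (\<forall>i\<in>{1..<k}. u (\<sigma> i) = v (\<sigma> i)) \<and> u (\<sigma> k) < v (\<sigma> k))"

(* L(u;V), with u - e_l + e_j computed in Z^p *)
definition Lset :: "nat \<Rightarrow> (nat \<Rightarrow> nat) \<Rightarrow> (nat \<Rightarrow> nat) set \<Rightarrow> nat set" where
  "Lset p u V = {l \<in> {1..p}. \<exists>j\<in>{1..p}. \<exists>v\<in>V.
      \<forall>k. int (v k) = int (u k) - (if k = l then 1 else 0) + (if k = j then 1 else 0)}"

definition St :: "nat \<Rightarrow> (nat \<Rightarrow> nat) \<Rightarrow> (nat \<Rightarrow> nat) set \<Rightarrow> (nat \<Rightarrow> nat) set" where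
  "St p u V = {(\<lambda>k. u k - (if k \<in> J then 1 else 0)) | J. J \<subseteq> Lset p u V}"

(* c_n(P): number of a_k with n \<in> St(a_k; {a_1,...,a_{k-1}}) *)
definition stal_c :: "nat \<Rightarrow> (nat \<Rightarrow> nat) \<Rightarrow> (nat \<Rightarrow> nat) set \<Rightarrow> (nat \<Rightarrow> nat) \<Rightarrow> nat" where
  "stal_c p \<sigma> P n = card {a \<in> P. n \<in> St p a {b \<in> P. lex_less p \<sigma> b a}}"

(* Multivariate polynomials in t_1..t_p are represented by their coefficient maps
   (exponent vector n \<mapsto> coefficient of t^n). *)
definition Stal :: "nat \<Rightarrow> (nat \<Rightarrow> nat) \<Rightarrow> (nat \<Rightarrow> nat) set \<Rightarrow> (nat \<Rightarrow> nat) \<Rightarrow> int" where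
  "Stal p \<sigma> P n = (if n \<in> Ideal p P
      then (-1) ^ (rk p P - size1 p n) * int (stal_c p \<sigma> P n) else 0)"

definition mobius :: "'a set \<Rightarrow> ('a \<Rightarrow> 'a \<Rightarrow> bool) \<Rightarrow> 'a \<Rightarrow> 'a \<Rightarrow> int" where
  "mobius S le = (THE f.
     (\<forall>m n. (m \<notin> S \<or> n \<notin> S) \<longrightarrow> f m n = 0) \<and>
     (\<forall>m\<in>S. \<forall>n\<in>S. f m n =
        (if m = n then 1
         else if le m n then - (\<Sum>a\<in>{a \<in> S. le m a \<and> le a n \<and> a \<noteq> n}. f m a)
         else 0)))"

(* The poset P = I(P) \<sqcup> {top}: Some n for n \<in> I(P), None for the new maximum *)
definition Pset :: "nat \<Rightarrow> (nat \<Rightarrow> nat) set \<Rightarrow> (nat \<Rightarrow> nat) option set" where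
  "Pset p P = Some ` Ideal p P \<union> {None}"

fun Ple :: "(nat \<Rightarrow> nat) option \<Rightarrow> (nat \<Rightarrow> nat) option \<Rightarrow> bool" where
  "Ple _ None = True"
| "Ple None (Some _) = False"
| "Ple (Some a) (Some b) = (a \<le> b)"

definition mu_P :: "nat \<Rightarrow> (nat \<Rightarrow> nat) set \<Rightarrow> (nat \<Rightarrow> nat) \<Rightarrow> int" where
  "mu_P p P n = - mobius (Pset p P) Ple (Some n) None"

definition Mob :: "nat \<Rightarrow> (nat \<Rightarrow> nat) set \<Rightarrow> (nat \<Rightarrow> nat) \<Rightarrow> int" where
  "Mob p P n = (if n \<in> Ideal p P then mu_P p P n else 0)"

end

theory Submission
  imports Defs
begin

(* Since I(P) is a down-set of N^p, every interval [m, b] of I(P) is a box of N^p, so below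
   the adjoined top the Moebius function of I(P) is that of N^p: mu(m, c) = (-1)^(|c| - |m|) if
   c - m is a 0/1-vector and 0 otherwise. Hence Moeb(n) is the sum of mu(n, c) over c in I(P).
   Each c in I(P) lies below a lexicographically first basis a, and the exchange axiom shows that
   the set of these c (the lex cell of a) is the box {c <= a : c_l = a_l for l in L(a)}. The sum
   of mu(n, -) over this box vanishes if n < a in some free coordinate (toggle that coordinate);
   otherwise a is the only point of the box above n, and the sum is
   mu(n, a) = (-1)^(rk - |n|) [n in St(a)]. Summing over all cells gives Stal(n). *)

lemma sum_neg_one_pow_card_eq_0:
  fixes F :: "'a set set"
  assumes fin: "\<And>J. J \<in> F \<Longrightarrow> finite J"
    and "\<And>J. J \<in> F \<Longrightarrow> insert i J \<in> F"
    and "\<And>J. J \<in> F \<Longrightarrow> J - {i} \<in> F"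
  shows "(\<Sum>J\<in>F. (-1::int) ^ card J) = 0"
proof -
  define toggle where "toggle J = (if i \<in> J then J - {i} else insert i J)" for J :: "'a set"
  have toggle_toggle: "toggle (toggle J) = J" for J
    by (auto simp: toggle_def insert_absorb)
  have toggle_mem: "toggle J \<in> F" if "J \<in> F" for J
    using that assms by (simp add: toggle_def)
  have card_toggle: "(-1::int) ^ card (toggle J) = - ((-1) ^ card J)" if "J \<in> F" for J
  proof (cases "i \<in> J")
    case True
    then have "card J = Suc (card (toggle J))"
      using card_Suc_Diff1[OF fin[OF that] True] by (simp add: toggle_def)
    then show ?thesis by simp
  qed (use fin[OF that] in \<open>simp add: toggle_def\<close>)
  have "(\<Sum>J\<in>F. (-1::int) ^ card J) = (\<Sum>J\<in>F. (-1) ^ card (toggle J))"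
    by (rule sum.reindex_bij_witness[of _ toggle toggle]) (simp_all add: toggle_toggle toggle_mem)
  also have "\<dots> = - (\<Sum>J\<in>F. (-1) ^ card J)"
    by (simp add: card_toggle sum_negf)
  finally show ?thesis by simp
qed

section \<open>Moebius functions of finite posets\<close>

definition mobius_rec :: "'a set \<Rightarrow> ('a \<Rightarrow> 'a \<Rightarrow> bool) \<Rightarrow> ('a \<Rightarrow> 'a \<Rightarrow> int) \<Rightarrow> bool" where
  "mobius_rec S le f \<longleftrightarrow>
     (\<forall>m n. (m \<notin> S \<or> n \<notin> S) \<longrightarrow> f m n = 0) \<and>
     (\<forall>m\<in>S. \<forall>n\<in>S. f m n =
        (if m = n then 1
         else if le m n then - (\<Sum>a\<in>{a \<in> S. le m a \<and> le a n \<and> a \<noteq> n}. f m a)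
         else 0))"

lemma mobius_rec_unique:
  assumes "finite S"
    and le_antisym: "\<And>x y. x \<in> S \<Longrightarrow> y \<in> S \<Longrightarrow> le x y \<Longrightarrow> le y x \<Longrightarrow> x = y"
    and le_trans: "\<And>x y z. x \<in> S \<Longrightarrow> y \<in> S \<Longrightarrow> z \<in> S \<Longrightarrow> le x y \<Longrightarrow> le y z \<Longrightarrow> le x z"
    and le_refl: "\<And>x. x \<in> S \<Longrightarrow> le x x"
    and f: "mobius_rec S le f" and g: "mobius_rec S le g"
  shows "f = g"
proof (intro ext)
  fix m n
  show "f m n = g m n"
  proof (induction "card {x \<in> S. le x n}" arbitrary: n rule: less_induct)
    case less
    show ?case
    proof (cases "m \<in> S \<and> n \<in> S")
      case False
      then show ?thesis using f g unfolding mobius_rec_def by auto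
    next
      case True
      have IH: "f m a = g m a" if a: "a \<in> {a \<in> S. le m a \<and> le a n \<and> a \<noteq> n}" for a
      proof (rule less)
        have "{x \<in> S. le x a} \<subseteq> {x \<in> S. le x n}" using le_trans a True by blast
        moreover have "n \<in> {x \<in> S. le x n} - {x \<in> S. le x a}"
          using le_refl le_antisym a True by blast
        ultimately have "{x \<in> S. le x a} \<subset> {x \<in> S. le x n}" by blast
        then show "card {x \<in> S. le x a} < card {x \<in> S. le x n}"
          using \<open>finite S\<close> by (intro psubset_card_mono) auto
      qed
      have rec: "h m n = (if m = n then 1
         else if le m n then - (\<Sum>a\<in>{a \<in> S. le m a \<and> le a n \<and> a \<noteq> n}. h m a) else 0)"
        if "mobius_rec S le h" for h
        using that True unfolding mobius_rec_def by blast
      have "(\<Sum>a\<in>{a \<in> S. le m a \<and> le a n \<and> a \<noteq> n}. f m a)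
          = (\<Sum>a\<in>{a \<in> S. le m a \<and> le a n \<and> a \<noteq> n}. g m a)"
        using IH by (rule sum.cong[OF refl])
      then show ?thesis using rec[OF f] rec[OF g] by simp
    qed
  qed
qed

lemma mobius_eqI:
  assumes "finite S"
    and "\<And>x y. x \<in> S \<Longrightarrow> y \<in> S \<Longrightarrow> le x y \<Longrightarrow> le y x \<Longrightarrow> x = y"
    and "\<And>x y z. x \<in> S \<Longrightarrow> y \<in> S \<Longrightarrow> z \<in> S \<Longrightarrow> le x y \<Longrightarrow> le y z \<Longrightarrow> le x z"
    and "\<And>x. x \<in> S \<Longrightarrow> le x x"
    and "mobius_rec S le f"
  shows "mobius S le = f"
  unfolding mobius_def mobius_rec_def[symmetric]
proof (rule the_equality)
  show "f' = f" if "mobius_rec S le f'" for f'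
    using mobius_rec_unique[OF assms(1-4) that assms(5)] .
qed (rule assms(5))

section \<open>The Moebius function of N^p on boxes\<close>

definition plus_e :: "(nat \<Rightarrow> nat) \<Rightarrow> nat set \<Rightarrow> nat \<Rightarrow> nat" where
  "plus_e n J = (\<lambda>k. n k + (if k \<in> J then 1 else 0))"

definition box :: "nat \<Rightarrow> (nat \<Rightarrow> nat) \<Rightarrow> (nat \<Rightarrow> nat) \<Rightarrow> (nat \<Rightarrow> nat) set" where
  "box p lo hi = {c \<in> vecs p. lo \<le> c \<and> c \<le> hi}"

definition nat_vec_mobius :: "nat \<Rightarrow> (nat \<Rightarrow> nat) \<Rightarrow> (nat \<Rightarrow> nat) \<Rightarrow> int" where
  "nat_vec_mobius p n c =
     (if n \<le> c \<and> (\<forall>i. c i \<le> Suc (n i)) then (-1) ^ (size1 p c - size1 p n) else 0)"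

lemma inj_plus_e: "inj (plus_e n)"
proof
  fix J1 J2 assume "plus_e n J1 = plus_e n J2"
  then have "k \<in> J1 \<longleftrightarrow> k \<in> J2" for k
    by (auto simp: plus_e_def dest: fun_cong[where x = k] split: if_splits)
  then show "J1 = J2" by blast
qed

lemma plus_e_in_vecs: "n \<in> vecs p \<Longrightarrow> J \<subseteq> {1..p} \<Longrightarrow> plus_e n J \<in> vecs p"
  unfolding vecs_def plus_e_def by auto

lemma size1_plus_e:
  assumes "J \<subseteq> {1..p}"
  shows "size1 p (plus_e n J) = size1 p n + card J"
proof -
  have "(\<Sum>i\<in>{1..p}. if i \<in> J then 1 else 0::nat) = card ({1..p} \<inter> J)"
    by (simp add: sum.If_cases Int_def)
  then show ?thesis
    using assms unfolding size1_def plus_e_def by (simp add: sum.distrib Int_absorb1)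
qed

lemma vecs_differ_in_range:
  assumes "u \<in> vecs p" "v \<in> vecs p" "u i \<noteq> v i"
  shows "i \<in> {1..p}"
proof (rule ccontr)
  assume "i \<notin> {1..p}"
  then have "u i = 0" "v i = 0" using assms(1,2) unfolding vecs_def by simp_all
  then show False using assms(3) by simp
qed

lemma finite_box: "finite (box p lo hi)"
proof (rule finite_subset)
  let ?M = "Max (hi ` {1..p})"
  show "box p lo hi \<subseteq> {f. \<forall>x. (x \<in> {1..p} \<longrightarrow> f x \<in> {0..?M}) \<and> (x \<notin> {1..p} \<longrightarrow> f x = 0)}"
  proof safe
    fix f x assume "f \<in> box p lo hi" "x \<in> {1..p}"
    then have "f x \<le> hi x" "hi x \<le> ?M" by (auto simp: box_def le_fun_def)
    then show "f x \<in> {0..?M}" by simp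
  qed (auto simp: box_def vecs_def)
qed (rule finite_set_of_finite_funs; simp)

lemma box_bot: "box p (\<lambda>_. 0) hi = {c \<in> vecs p. c \<le> hi}"
  by (auto simp: box_def le_fun_def)

lemma nat_vec_mobius_plus_e:
  "J \<subseteq> {1..p} \<Longrightarrow> nat_vec_mobius p n (plus_e n J) = (-1) ^ card J"
  by (simp add: nat_vec_mobius_def size1_plus_e) (simp add: plus_e_def le_fun_def)

lemma nat_vec_mobius_nonzero:
  assumes "n \<in> vecs p" "c \<in> vecs p" "nat_vec_mobius p n c \<noteq> 0"
  obtains J where "J \<subseteq> {1..p}" "c = plus_e n J"
proof
  show "{i \<in> {1..p}. c i \<noteq> n i} \<subseteq> {1..p}" by blast
  show "c = plus_e n {i \<in> {1..p}. c i \<noteq> n i}"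
  proof
    fix k
    have "n k \<le> c k" "c k \<le> Suc (n k)"
      using assms(3) by (auto simp: nat_vec_mobius_def le_fun_def split: if_splits)
    then show "c k = plus_e n {i \<in> {1..p}. c i \<noteq> n i} k"
      using assms(1,2) by (auto simp: plus_e_def vecs_def)
  qed
qed

lemma sum_nat_vec_mobius_eq_sum_subsets:
  assumes n: "n \<in> vecs p" and B: "B \<subseteq> vecs p" "finite B"
  shows "(\<Sum>c\<in>B. nat_vec_mobius p n c)
       = (\<Sum>J\<in>{J. J \<subseteq> {1..p} \<and> plus_e n J \<in> B}. (-1) ^ card J)"
proof -
  define F where "F = {J. J \<subseteq> {1..p} \<and> plus_e n J \<in> B}"
  have "nat_vec_mobius p n c = 0" if c: "c \<in> B" "c \<notin> plus_e n ` F" for c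
  proof (rule ccontr)
    assume "nat_vec_mobius p n c \<noteq> 0"
    moreover have "c \<in> vecs p" using B c by blast
    ultimately obtain J where "J \<subseteq> {1..p}" "c = plus_e n J"
      using n nat_vec_mobius_nonzero by blast
    then show False using c unfolding F_def by blast
  qed
  then have "(\<Sum>c\<in>B. nat_vec_mobius p n c) = (\<Sum>c\<in>plus_e n ` F. nat_vec_mobius p n c)"
    by (intro sum.mono_neutral_right B(2)) (auto simp: F_def)
  also have "\<dots> = (\<Sum>J\<in>F. nat_vec_mobius p n (plus_e n J))"
    using sum.reindex[OF inj_on_subset[OF inj_plus_e, of F]] by simp
  also have "\<dots> = (\<Sum>J\<in>F. (-1) ^ card J)"
    by (intro sum.cong) (auto simp: F_def nat_vec_mobius_plus_e)
  finally show ?thesis unfolding F_def .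
qed

lemma sum_nat_vec_mobius_box_eq_0:
  assumes n: "n \<in> vecs p" and i: "i \<in> {1..p}" "lo i \<le> n i" "n i < hi i"
  shows "(\<Sum>c\<in>box p lo hi. nat_vec_mobius p n c) = 0"
proof -
  define F where "F = {J. J \<subseteq> {1..p} \<and> plus_e n J \<in> box p lo hi}"
  have F_iff: "J \<in> F \<longleftrightarrow> J \<subseteq> {1..p} \<and> lo \<le> plus_e n J \<and> plus_e n J \<le> hi" for J
    using plus_e_in_vecs[OF n, of J] unfolding F_def box_def by blast
  have toggle_i: "lo \<le> plus_e n J' \<and> plus_e n J' \<le> hi"
    if "lo \<le> plus_e n J" "plus_e n J \<le> hi" "\<And>k. k \<noteq> i \<Longrightarrow> (k \<in> J') = (k \<in> J)" for J J'
  proof (intro conjI le_funI)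
    fix k
    have "lo k \<le> plus_e n J k" "plus_e n J k \<le> hi k" using that(1,2) by (auto simp: le_fun_def)
    then show "lo k \<le> plus_e n J' k" "plus_e n J' k \<le> hi k"
      using that(3)[of k] i(2,3) by (cases "k = i"; auto simp: plus_e_def split: if_splits)+
  qed
  have "(\<Sum>c\<in>box p lo hi. nat_vec_mobius p n c) = (\<Sum>J\<in>F. (-1) ^ card J)"
    unfolding F_def by (rule sum_nat_vec_mobius_eq_sum_subsets[OF n _ finite_box]) (simp add: box_def)
  also have "\<dots> = 0"
  proof (rule sum_neg_one_pow_card_eq_0)
    fix J assume J: "J \<in> F"
    then show "finite J" using F_iff finite_subset by blast
    show "insert i J \<in> F" "J - {i} \<in> F"
      using J i(1) toggle_i[of J "insert i J"] toggle_i[of J "J - {i}"] unfolding F_iff by auto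
  qed
  finally show ?thesis .
qed

lemma nat_vec_mobius_rec:
  assumes m: "m \<in> vecs p" and b: "b \<in> vecs p" and "m \<le> b" "m \<noteq> b"
  shows "nat_vec_mobius p m b = - (\<Sum>c\<in>box p m b - {b}. nat_vec_mobius p m c)"
proof -
  obtain i where i: "m i \<noteq> b i" using \<open>m \<noteq> b\<close> by (auto simp: fun_eq_iff)
  have "i \<in> {1..p}" using m b i by (rule vecs_differ_in_range)
  moreover have "m i < b i" using i le_funD[OF \<open>m \<le> b\<close>, of i] by simp
  ultimately have "(\<Sum>c\<in>box p m b. nat_vec_mobius p m c) = 0"
    by (intro sum_nat_vec_mobius_box_eq_0[OF m]) simp_all
  moreover have "b \<in> box p m b" using b \<open>m \<le> b\<close> by (simp add: box_def)
  then have "(\<Sum>c\<in>box p m b. nat_vec_mobius p m c)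
      = nat_vec_mobius p m b + (\<Sum>c\<in>box p m b - {b}. nat_vec_mobius p m c)"
    by (rule sum.remove[OF finite_box])
  ultimately show ?thesis by simp
qed

lemma sum_nat_vec_mobius_above:
  "finite B \<Longrightarrow> (\<Sum>c\<in>{c \<in> B. n \<le> c}. nat_vec_mobius p n c) = (\<Sum>c\<in>B. nat_vec_mobius p n c)"
  by (rule sum.mono_neutral_left) (auto simp: nat_vec_mobius_def)

lemma finite_Ideal: "finite P \<Longrightarrow> finite (Ideal p P)"
proof -
  have "Ideal p P = (\<Union>u\<in>P. box p (\<lambda>_. 0) u)" unfolding Ideal_def box_bot by auto
  then show "finite P \<Longrightarrow> finite (Ideal p P)" using finite_box by simp
qed

lemma Ideal_vecs: "Ideal p P \<subseteq> vecs p"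
  unfolding Ideal_def by blast

lemma Ideal_interval: "b \<in> Ideal p P \<Longrightarrow> {c \<in> Ideal p P. m \<le> c \<and> c \<le> b} = box p m b"
  unfolding Ideal_def box_def using order_trans by blast

section \<open>Lexicographic orders\<close>

lemma lex_less_irrefl: "\<not> lex_less p \<sigma> u u"
  unfolding lex_less_def by simp

lemma lex_less_trans:
  assumes uv: "lex_less p \<sigma> u v" and vw: "lex_less p \<sigma> v w"
  shows "lex_less p \<sigma> u w"
proof -
  obtain k1 where k1: "k1 \<in> {1..p}" "\<forall>i\<in>{1..<k1}. u (\<sigma> i) = v (\<sigma> i)" "u (\<sigma> k1) < v (\<sigma> k1)"
    using uv unfolding lex_less_def by blast
  obtain k2 where k2: "k2 \<in> {1..p}" "\<forall>i\<in>{1..<k2}. v (\<sigma> i) = w (\<sigma> i)" "v (\<sigma> k2) < w (\<sigma> k2)"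
    using vw unfolding lex_less_def by blast
  define k where "k = min k1 k2"
  have kp: "k \<in> {1..p}" using k1 k2 unfolding k_def by auto
  have agree: "\<forall>i\<in>{1..<k}. u (\<sigma> i) = w (\<sigma> i)" using k1 k2 unfolding k_def by auto
  have lt: "u (\<sigma> k) < w (\<sigma> k)"
  proof (cases k1 k2 rule: linorder_cases)
    case less
    then have "k = k1" "v (\<sigma> k1) = w (\<sigma> k1)" using k1 k2 unfolding k_def by auto
    then show ?thesis using k1 by simp
  next
    case equal
    then show ?thesis using k1 k2 unfolding k_def by simp
  next
    case greater
    then have "k = k2" "u (\<sigma> k2) = v (\<sigma> k2)" using k1 k2 unfolding k_def by auto
    then show ?thesis using k2 by simp
  qed
  have "u \<noteq> w" using lt by auto
  then show ?thesis unfolding lex_less_def using kp agree lt by blast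
qed

lemma lex_less_total:
  assumes bij: "bij_betw \<sigma> {1..p} {1..p}" and u: "u \<in> vecs p" and v: "v \<in> vecs p" and ne: "u \<noteq> v"
  shows "lex_less p \<sigma> u v \<or> lex_less p \<sigma> v u"
proof -
  obtain i where i: "u i \<noteq> v i" using ne by blast
  have ip: "i \<in> {1..p}" using u v i by (rule vecs_differ_in_range)
  have "i \<in> \<sigma> ` {1..p}" using ip bij unfolding bij_betw_def by simp
  then obtain k0 where k0: "k0 \<in> {1..p}" "\<sigma> k0 = i" by auto
  define Q where "Q = (\<lambda>k. k \<in> {1..p} \<and> u (\<sigma> k) \<noteq> v (\<sigma> k))"
  have Qk0: "Q k0" using k0 i unfolding Q_def by simp
  define k where "k = (LEAST k. Q k)"
  have Qk: "Q k" unfolding k_def by (rule LeastI[where P=Q, OF Qk0])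
  have agree: "\<forall>j\<in>{1..<k}. u (\<sigma> j) = v (\<sigma> j)"
  proof
    fix j assume j: "j \<in> {1..<k}"
    then have "\<not> Q j" unfolding k_def using not_less_Least by auto
    moreover have "j \<in> {1..p}" using j Qk unfolding Q_def by auto
    ultimately show "u (\<sigma> j) = v (\<sigma> j)" unfolding Q_def by simp
  qed
  have kp: "k \<in> {1..p}" using Qk unfolding Q_def by simp
  show ?thesis
  proof (cases "u (\<sigma> k) < v (\<sigma> k)")
    case True
    then show ?thesis unfolding lex_less_def using ne kp agree by blast
  next
    case False
    then have "v (\<sigma> k) < u (\<sigma> k)" using Qk unfolding Q_def by simp
    moreover have "\<forall>j\<in>{1..<k}. v (\<sigma> j) = u (\<sigma> j)" using agree by simp
    ultimately show ?thesis unfolding lex_less_def using ne kp by blast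
  qed
qed

lemma exists_lex_minimal:
  assumes "finite A" "A \<noteq> {}"
  shows "\<exists>a\<in>A. \<forall>b\<in>A. \<not> lex_less p \<sigma> b a"
  using assms
proof (induction A rule: finite_ne_induct)
  case (singleton x)
  then show ?case using lex_less_irrefl by auto
next
  case (insert x F)
  then obtain a0 where a0: "a0 \<in> F" "\<forall>b\<in>F. \<not> lex_less p \<sigma> b a0" by blast
  show ?case
  proof (cases "lex_less p \<sigma> x a0")
    case True
    have "\<forall>b\<in>insert x F. \<not> lex_less p \<sigma> b x"
      using a0 True lex_less_trans lex_less_irrefl by blast
    then show ?thesis by blast
  next
    case False
    then show ?thesis using a0 by blast
  qed
qed

lemma Lset_witness:
  assumes pm: "polymatroid p P" and bij: "bij_betw \<sigma> {1..p} {1..p}"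
    and a: "a \<in> P" and b: "b \<in> P" and ba: "lex_less p \<sigma> b a"
  obtains s where "b s < a s" "s \<in> Lset p a {b \<in> P. lex_less p \<sigma> b a}"
proof -
  obtain k where k: "k \<in> {1..p}" "\<forall>i\<in>{1..<k}. b (\<sigma> i) = a (\<sigma> i)" "b (\<sigma> k) < a (\<sigma> k)"
    using ba unfolding lex_less_def by blast
  define s where "s = \<sigma> k"
  have inj: "inj_on \<sigma> {1..p}" using bij by (rule bij_betw_imp_inj_on)
  have s: "s \<in> {1..p}" "b s < a s" using k bij unfolding s_def bij_betw_def by auto
  then obtain j where j: "j \<in> {1..p}" "a j < b j" and v: "exch a s j \<in> P"
    using pm a b unfolding polymatroid_def by blast
  obtain k' where k': "k' \<in> {1..p}" "\<sigma> k' = j"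
    using j(1) bij unfolding bij_betw_def by (metis imageE)
  \<comment> \<open>b agrees with a before position k and exceeds it at j, so j comes after s in the order\<close>
  have "k' \<noteq> k" using k' j(2) s(2) unfolding s_def by auto
  moreover have "\<not> k' < k" using k(2) k'(1) k'(2) j(2) by fastforce
  ultimately have "k < k'" by simp
  have "exch a s j (\<sigma> i) = a (\<sigma> i)" if "i \<in> {1..<k}" for i
  proof -
    have "i \<in> {1..p}" "i \<noteq> k" "i \<noteq> k'" using that k(1) \<open>k < k'\<close> by auto
    then have "\<sigma> i \<noteq> s" "\<sigma> i \<noteq> j"
      using k(1) k' inj_on_eq_iff[OF inj] unfolding s_def by metis+
    then show ?thesis by (simp add: exch_def)
  qed
  moreover have "j \<noteq> s" using j(2) s(2) by auto
  then have "exch a s j s < a s" using s(2) by (simp add: exch_def)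
  moreover have "exch a s j \<noteq> a" using calculation(2) by auto
  ultimately have "lex_less p \<sigma> (exch a s j) a"
    unfolding lex_less_def s_def using k(1) by blast
  moreover have "int (exch a s j k) = int (a k) - (if k = s then 1 else 0) + (if k = j then 1 else 0)" for k
    using s(2) unfolding exch_def by auto
  ultimately have "s \<in> Lset p a {b \<in> P. lex_less p \<sigma> b a}"
    unfolding Lset_def using s(1) j(1) v by blast
  then show thesis using s(2) that by blast
qed

section \<open>Lex cells\<close>

definition lex_cell :: "nat \<Rightarrow> (nat \<Rightarrow> nat) \<Rightarrow> (nat \<Rightarrow> nat) set \<Rightarrow> (nat \<Rightarrow> nat) \<Rightarrow> (nat \<Rightarrow> nat) set" where
  "lex_cell p \<sigma> P a = {m \<in> vecs p. m \<le> a \<and> \<not> (\<exists>b\<in>P. lex_less p \<sigma> b a \<and> m \<le> b)}"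

lemma lex_cell_eq_box:
  assumes pm: "polymatroid p P" and bij: "bij_betw \<sigma> {1..p} {1..p}" and a: "a \<in> P"
  defines "L \<equiv> Lset p a {b \<in> P. lex_less p \<sigma> b a}"
  shows "lex_cell p \<sigma> P a = box p (\<lambda>k. if k \<in> L then a k else 0) a"
proof -
  have below_smaller_iff: "(\<exists>b\<in>P. lex_less p \<sigma> b a \<and> m \<le> b) \<longleftrightarrow> (\<exists>l\<in>L. m l < a l)"
    if m: "m \<le> a" for m
  proof
    assume "\<exists>b\<in>P. lex_less p \<sigma> b a \<and> m \<le> b"
    then obtain b where b: "b \<in> P" "lex_less p \<sigma> b a" "m \<le> b" by blast
    obtain s where "b s < a s" "s \<in> L"
      using Lset_witness[OF pm bij a b(1,2)] unfolding L_def by blast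
    moreover have "m s \<le> b s" using b(3) by (simp add: le_fun_def)
    ultimately show "\<exists>l\<in>L. m l < a l" by force
  next
    assume "\<exists>l\<in>L. m l < a l"
    then obtain l j v where l: "m l < a l" and v: "v \<in> P" "lex_less p \<sigma> v a"
      and v_eq: "\<And>k. int (v k) = int (a k) - (if k = l then 1 else 0) + (if k = j then 1 else 0)"
      unfolding L_def Lset_def by blast
    have "m k \<le> v k" for k
      using v_eq[of k] m l le_funD[OF m, of k] by (auto split: if_splits)
    then show "\<exists>b\<in>P. lex_less p \<sigma> b a \<and> m \<le> b" using v by (auto simp: le_fun_def)
  qed
  have "m \<in> lex_cell p \<sigma> P a \<longleftrightarrow> m \<in> box p (\<lambda>k. if k \<in> L then a k else 0) a" for m
  proof (cases "m \<in> vecs p \<and> m \<le> a")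
    case True
    then have "(\<forall>l\<in>L. \<not> m l < a l) \<longleftrightarrow> (\<lambda>k. if k \<in> L then a k else 0) \<le> m"
      by (auto simp: le_fun_def not_less)
    then show ?thesis using True below_smaller_iff unfolding lex_cell_def box_def by blast
  qed (auto simp: lex_cell_def box_def)
  then show ?thesis by blast
qed

lemma mem_St_iff:
  "n \<in> St p a V \<longleftrightarrow> n \<le> a \<and> (\<forall>i. n i < a i \<longrightarrow> i \<in> Lset p a V \<and> a i = Suc (n i))"
proof
  assume "n \<in> St p a V"
  then obtain J where "J \<subseteq> Lset p a V" "n = (\<lambda>k. a k - (if k \<in> J then 1 else 0))"
    unfolding St_def by blast
  then show "n \<le> a \<and> (\<forall>i. n i < a i \<longrightarrow> i \<in> Lset p a V \<and> a i = Suc (n i))"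
    by (auto simp: le_fun_def split: if_splits)
next
  assume n: "n \<le> a \<and> (\<forall>i. n i < a i \<longrightarrow> i \<in> Lset p a V \<and> a i = Suc (n i))"
  have "n = (\<lambda>k. a k - (if k \<in> {i. n i < a i} then 1 else 0))"
  proof
    fix k
    show "n k = a k - (if k \<in> {i. n i < a i} then 1 else 0)"
      using n le_funD[of n a k] by auto
  qed
  moreover have "{i. n i < a i} \<subseteq> Lset p a V" using n by blast
  ultimately show "n \<in> St p a V" unfolding St_def by blast
qed

lemma sum_nat_vec_mobius_lex_cell:
  assumes pm: "polymatroid p P" and bij: "bij_betw \<sigma> {1..p} {1..p}" and a: "a \<in> P"
    and n: "n \<in> vecs p"
  shows "(\<Sum>c\<in>lex_cell p \<sigma> P a. nat_vec_mobius p n c)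
       = (if n \<in> St p a {b \<in> P. lex_less p \<sigma> b a} then (-1) ^ (size1 p a - size1 p n) else 0)"
proof -
  define L where "L = Lset p a {b \<in> P. lex_less p \<sigma> b a}"
  define lo where "lo = (\<lambda>k. if k \<in> L then a k else 0)"
  have cell: "lex_cell p \<sigma> P a = box p lo a"
    unfolding lo_def L_def by (rule lex_cell_eq_box[OF pm bij a])
  have a_vec: "a \<in> vecs p" using pm a by (auto simp: polymatroid_def)
  show ?thesis
  proof (cases "\<exists>i. n i < a i \<and> i \<notin> L")
    case True
    then obtain i where i: "n i < a i" "i \<notin> L" by blast
    have "i \<in> {1..p}" using i(1) by (intro vecs_differ_in_range[OF n a_vec]) simp
    then have "(\<Sum>c\<in>box p lo a. nat_vec_mobius p n c) = 0"
      using i by (intro sum_nat_vec_mobius_box_eq_0[OF n]) (auto simp: lo_def)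
    moreover have "n \<notin> St p a {b \<in> P. lex_less p \<sigma> b a}"
      using i by (auto simp: mem_St_iff L_def)
    ultimately show ?thesis using cell by simp
  next
    case False
    \<comment> \<open>the box fixes every coordinate in which n is below a\<close>
    have "c = a" if c: "c \<in> box p lo a" "n \<le> c" for c
    proof
      fix k
      have "lo k \<le> c k" "c k \<le> a k" "n k \<le> c k" using c by (auto simp: box_def le_fun_def)
      moreover have "n k < a k \<longrightarrow> k \<in> L" using False by blast
      ultimately show "c k = a k" by (cases "k \<in> L") (auto simp: lo_def)
    qed
    then have "nat_vec_mobius p n c = 0" if "c \<in> box p lo a - {a}" for c
      using that by (auto simp: nat_vec_mobius_def)
    moreover have "a \<in> box p lo a" using a_vec by (auto simp: box_def lo_def le_fun_def)
    ultimately have "(\<Sum>c\<in>box p lo a. nat_vec_mobius p n c) = (\<Sum>c\<in>{a}. nat_vec_mobius p n c)"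
      by (intro sum.mono_neutral_right finite_box) auto
    also have "\<dots> = nat_vec_mobius p n a" by simp
    also have "\<dots> = (if n \<in> St p a {b \<in> P. lex_less p \<sigma> b a} then (-1) ^ (size1 p a - size1 p n) else 0)"
    proof -
      have "a i \<le> Suc (n i) \<longleftrightarrow> (n i < a i \<longrightarrow> i \<in> L \<and> a i = Suc (n i))" if "n \<le> a" for i
        using False le_funD[OF that, of i] by auto
      then show ?thesis unfolding nat_vec_mobius_def mem_St_iff L_def[symmetric] by auto
    qed
    finally show ?thesis using cell by simp
  qed
qed

lemma Ideal_eq_UN_lex_cell:
  assumes "finite P"
  shows "Ideal p P = (\<Union>a\<in>P. lex_cell p \<sigma> P a)"
proof
  show "Ideal p P \<subseteq> (\<Union>a\<in>P. lex_cell p \<sigma> P a)"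
  proof
    fix c assume c: "c \<in> Ideal p P"
    have "finite {a \<in> P. c \<le> a}" "{a \<in> P. c \<le> a} \<noteq> {}"
      using c assms unfolding Ideal_def by auto
    then obtain a where "a \<in> {a \<in> P. c \<le> a}" "\<forall>b\<in>{a \<in> P. c \<le> a}. \<not> lex_less p \<sigma> b a"
      using exists_lex_minimal by blast
    then show "c \<in> (\<Union>a\<in>P. lex_cell p \<sigma> P a)"
      using c unfolding lex_cell_def Ideal_def by auto
  qed
qed (auto simp: lex_cell_def Ideal_def)

lemma lex_cell_disjoint:
  assumes "bij_betw \<sigma> {1..p} {1..p}" "a \<in> vecs p" "a' \<in> vecs p" "a \<in> P" "a' \<in> P" "a \<noteq> a'"
  shows "lex_cell p \<sigma> P a \<inter> lex_cell p \<sigma> P a' = {}"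
  using lex_less_total[OF assms(1-3,6)] assms(4,5) unfolding lex_cell_def by auto

lemma sum_Ideal_eq_sum_lex_cells:
  assumes pm: "polymatroid p P" and bij: "bij_betw \<sigma> {1..p} {1..p}"
  shows "(\<Sum>c\<in>Ideal p P. f c) = (\<Sum>a\<in>P. \<Sum>c\<in>lex_cell p \<sigma> P a. f c)"
proof -
  have P: "finite P" "P \<subseteq> vecs p" using pm unfolding polymatroid_def by auto
  have "finite (lex_cell p \<sigma> P a)" for a
    by (rule finite_subset[OF _ finite_box[of p "\<lambda>_. 0" a]]) (auto simp: lex_cell_def box_bot)
  moreover have "lex_cell p \<sigma> P a \<inter> lex_cell p \<sigma> P a' = {}" if "a \<in> P" "a' \<in> P" "a \<noteq> a'" for a a'
    using lex_cell_disjoint[OF bij] P(2) that by blast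
  ultimately show ?thesis
    unfolding Ideal_eq_UN_lex_cell[OF P(1), of p \<sigma>] by (intro sum.UNION_disjoint P(1)) auto
qed

section \<open>The Moebius polynomial\<close>

fun Pset_mobius :: "nat \<Rightarrow> (nat \<Rightarrow> nat) set \<Rightarrow> (nat \<Rightarrow> nat) option \<Rightarrow> (nat \<Rightarrow> nat) option \<Rightarrow> int" where
  "Pset_mobius p P (Some m) (Some b) =
     (if m \<in> Ideal p P \<and> b \<in> Ideal p P then nat_vec_mobius p m b else 0)"
| "Pset_mobius p P (Some m) None =
     (if m \<in> Ideal p P then - (\<Sum>c\<in>Ideal p P. nat_vec_mobius p m c) else 0)"
| "Pset_mobius p P None None = 1"
| "Pset_mobius p P None (Some b) = 0"

lemma mobius_rec_Pset:
  assumes "finite P"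
  shows "mobius_rec (Pset p P) Ple (Pset_mobius p P)"
  unfolding mobius_rec_def
proof (intro conjI allI impI ballI)
  fix x y assume "x \<notin> Pset p P \<or> y \<notin> Pset p P"
  then show "Pset_mobius p P x y = 0" by (cases x; cases y) (auto simp: Pset_def)
next
  fix x y assume "x \<in> Pset p P" "y \<in> Pset p P"
  show "Pset_mobius p P x y = (if x = y then 1
      else if Ple x y then - (\<Sum>a\<in>{a \<in> Pset p P. Ple x a \<and> Ple a y \<and> a \<noteq> y}. Pset_mobius p P x a)
      else 0)"
  proof (cases x)
    case None
    then show ?thesis by (cases y) auto
  next
    case (Some m)
    then have m: "m \<in> Ideal p P" using \<open>x \<in> Pset p P\<close> unfolding Pset_def by auto
    show ?thesis
    proof (cases y)
      case None
      have "{a \<in> Pset p P. Ple (Some m) a \<and> Ple a None \<and> a \<noteq> None} = Some ` {c \<in> Ideal p P. m \<le> c}"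
        unfolding Pset_def by (auto elim: Ple.elims)
      then have "(\<Sum>a\<in>{a \<in> Pset p P. Ple (Some m) a \<and> Ple a None \<and> a \<noteq> None}. Pset_mobius p P (Some m) a)
          = (\<Sum>c\<in>Ideal p P. nat_vec_mobius p m c)"
        using m sum_nat_vec_mobius_above[OF finite_Ideal[OF assms]] by (simp add: sum.reindex)
      then show ?thesis using Some None m by simp
    next
      case (Some b)
      then have b: "b \<in> Ideal p P" using \<open>y \<in> Pset p P\<close> unfolding Pset_def by auto
      then have box: "{c \<in> Ideal p P. m \<le> c \<and> c \<le> b} = box p m b" by (rule Ideal_interval)
      have interval: "{a \<in> Pset p P. Ple (Some m) a \<and> Ple a (Some b) \<and> a \<noteq> Some b} = Some ` (box p m b - {b})"
        unfolding Pset_def box[symmetric] by (auto elim: Ple.elims)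
      have "box p m b \<subseteq> Ideal p P" using box by blast
      then have "(\<Sum>a\<in>{a \<in> Pset p P. Ple (Some m) a \<and> Ple a (Some b) \<and> a \<noteq> Some b}. Pset_mobius p P (Some m) a)
          = (\<Sum>c\<in>box p m b - {b}. nat_vec_mobius p m c)"
        unfolding interval using m by (simp add: sum.reindex subset_iff)
      moreover have "nat_vec_mobius p m b = - (\<Sum>c\<in>box p m b - {b}. nat_vec_mobius p m c)"
        if "m \<le> b" "m \<noteq> b"
        using m b Ideal_vecs that by (intro nat_vec_mobius_rec) auto
      ultimately show ?thesis using \<open>x = Some m\<close> Some m b by (auto simp: nat_vec_mobius_def)
    qed
  qed
qed

lemma mobius_Pset:
  assumes "finite P"
  shows "mobius (Pset p P) Ple = Pset_mobius p P"
proof (rule mobius_eqI[OF _ _ _ _ mobius_rec_Pset[OF assms]])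
  show "finite (Pset p P)" using finite_Ideal[OF assms] unfolding Pset_def by simp
  show "x = y" if "Ple x y" "Ple y x" for x y
    using that by (cases x; cases y) auto
  show "Ple x z" if "Ple x y" "Ple y z" for x y z
    using that by (cases x; cases y; cases z) auto
  show "Ple x x" for x
    by (cases x) auto
qed

lemma Mob_eq_sum:
  assumes "finite P" "n \<in> Ideal p P"
  shows "Mob p P n = (\<Sum>c\<in>Ideal p P. nat_vec_mobius p n c)"
  using assms by (simp add: Mob_def mu_P_def mobius_Pset)

lemma rk_eq_size1:
  assumes "polymatroid p P" "a \<in> P"
  shows "rk p P = size1 p a"
proof -
  have "(SOME u. u \<in> P) \<in> P" using assms(2) by (rule someI[where P = "\<lambda>u. u \<in> P"])
  then show ?thesis using assms unfolding rk_def polymatroid_def by blast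
qed

theorem mainTheorem8:
  fixes p :: nat and P :: "(nat \<Rightarrow> nat) set" and \<sigma> :: "nat \<Rightarrow> nat"
  assumes "polymatroid p P"
    and "bij_betw \<sigma> {1..p} {1..p}"
  shows "Stal p \<sigma> P = Mob p P"
proof
  fix n
  have "finite P" using assms(1) unfolding polymatroid_def by blast
  show "Stal p \<sigma> P n = Mob p P n"
  proof (cases "n \<in> Ideal p P")
    case True
    then have "n \<in> vecs p" using Ideal_vecs by blast
    have "Mob p P n = (\<Sum>a\<in>P. \<Sum>c\<in>lex_cell p \<sigma> P a. nat_vec_mobius p n c)"
      using Mob_eq_sum[OF \<open>finite P\<close> True] sum_Ideal_eq_sum_lex_cells[OF assms] by simp
    also have "\<dots> = (\<Sum>a\<in>P. if n \<in> St p a {b \<in> P. lex_less p \<sigma> b a}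
                             then (-1) ^ (rk p P - size1 p n) else 0)"
      using sum_nat_vec_mobius_lex_cell[OF assms _ \<open>n \<in> vecs p\<close>] rk_eq_size1[OF assms(1)]
      by (intro sum.cong) simp_all
    also have "\<dots> = Stal p \<sigma> P n"
      using True \<open>finite P\<close> by (simp add: Stal_def stal_c_def sum.If_cases Int_def conj_commute)
    finally show ?thesis by simp
  qed (simp add: Stal_def Mob_def)
qed

end
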